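(* For every $\xi\in\mathbb R$, $$\lim_{n\to\infty}\frac12\sum_{l=0}^{n}e^{i\xi(n-2l)/n}\Big\{p^{(H)}_n(l,n-l)^2-q^{(H)}_n(l,n-l)^2\Big\}=-\int_{-1/\sqrt2}^{1/\sqrt2}e^{i\xi x}\,\frac{x}{\pi(1-x^2)\sqrt{1-2x^2}}\,dx.$$
   Context: For $\min\{l,m\}\ge1$, $n=l+m$: $p^{(H)}_n(l,m)=(1/\sqrt2)^{n-1}\sum_{\gamma=1}^{(l-1)\wedge m}(-1)^{m-\gamma}\binom{l-1}{\gamma}\binom{m-1}{\gamma-1}$ and $q^{(H)}_n(l,m)=(1/\sqrt2)^{n-1}\sum_{\gamma=1}^{l\wedge(m-1)}(-1)^{m-\gamma-1}\binom{l-1}{\gamma-1}\binom{m-1}{\gamma}$ (empty sums are $0$); for $n\ge1$, $p^{(H)}_n(0,n)=0$, $q^{(H)}_n(0,n)=(-1/\sqrt2)^{n-1}$, $p^{(H)}_n(n,0)=(1/\sqrt2)^{n-1}$, $q^{(H)}_n(n,0)=0$. *)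

theory Defs
  imports "HOL-Analysis.Analysis"
begin

text \<open>pH l m and qH l m are p^(H)_n(l,m), q^(H)_n(l,m) with n = l + m.
  The value at l = m = 0 (n = 0) is not specified by the paper; we set it to 0.\<close>

definition pH :: "nat \<Rightarrow> nat \<Rightarrow> real" where
  "pH l m =
    (if l \<ge> 1 \<and> m \<ge> 1 then
       (1 / sqrt 2) ^ (l + m - 1) *
       (\<Sum>\<gamma> = 1..min (l - 1) m.
          (-1) ^ (m - \<gamma>) * real ((l - 1) choose \<gamma>) * real ((m - 1) choose (\<gamma> - 1)))
     else if l = 0 \<and> m \<ge> 1 then 0
     else if m = 0 \<and> l \<ge> 1 then (1 / sqrt 2) ^ (l - 1)
     else 0)"

definition qH :: "nat \<Rightarrow> nat \<Rightarrow> real" where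
  "qH l m =
    (if l \<ge> 1 \<and> m \<ge> 1 then
       (1 / sqrt 2) ^ (l + m - 1) *
       (\<Sum>\<gamma> = 1..min l (m - 1).
          (-1) ^ (m - \<gamma> - 1) * real ((l - 1) choose (\<gamma> - 1)) * real ((m - 1) choose \<gamma>))
     else if l = 0 \<and> m \<ge> 1 then (- 1 / sqrt 2) ^ (m - 1)
     else if m = 0 \<and> l \<ge> 1 then 0
     else 0)"

end

theory Submission
  imports Defs
begin

(*
  Let pH_hat n k = sum_l pH l (n-l) e^{ik(n-2l)} be the Fourier transform of the
  p-amplitudes on the n-th diagonal and pH_char n theta = sum_l e^{i theta (n-2l)} pH l (n-l)^2
  the characteristic function of their squares.  Since qH l m^2 = pH m l^2, the reflection
  l <-> n-l shows that the quantity of the theorem equals (pH_char n (xi/n) - pH_char n (-xi/n))/2.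

  1. Combinatorics: pH satisfies a second-order recurrence (pH_recurrence); with the auxiliary
     amplitude sH it becomes a first-order 2x2 transfer matrix in Fourier space, whose
     eigenvalues are e^{-i om k} and -e^{i om k} with sin (om k) = sin k / sqrt 2.  Hence
     pH_hat n k = e^{-in om k} a1 k + (-1)^n e^{in om k} a2 k  (pH_hat_closed_form).
  2. Parseval: 2 pi pH_char n theta is the integral over [-pi, pi] of
     pH_hat n k * conj (pH_hat n (k - theta)).
  3. Asymptotics for theta = xi/n: n (om k - om (k - xi/n)) -> xi om'(k) uniformly, so the two
     diagonal terms of this product converge (uniform_limit_osc_term); the two cross terms carry
     an extra phase e^{-+2in om k} and vanish by a Riemann-Lebesgue lemma for the phase om, whose
     stationary points k = +-pi/2 are cut out by short intervals (oscillatory_integral_vanishes).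
  4. Evaluation: |a1|^2 - |a2|^2 = om' = vel, the symmetries of vel fold [-pi, pi] onto [0, pi],
     and the substitution x = vel k turns the result into the stated density.
*)

section \<open>Combinatorics of the amplitudes\<close>

text \<open>The q-amplitudes are, up to sign, the p-amplitudes with the roles of l and m exchanged.\<close>

lemma qH_sq_eq_pH_sq: "(qH l m)^2 = (pH m l)^2"
proof -
  consider "l \<ge> 1 \<and> m \<ge> 1" | "l = 0 \<and> m \<ge> 1" | "m = 0 \<and> l \<ge> 1" | "l = 0 \<and> m = 0" by linarith
  then show ?thesis
  proof cases
    case 1
    have "qH l m = (-1)^(l+m-1) * pH m l"
    proof -
      have "qH l m = (1 / sqrt 2) ^ (l + m - 1) *
         (\<Sum>\<gamma> = 1..min l (m - 1). (-1)^(l+m-1) * ((-1) ^ (l - \<gamma>) * real ((m - 1) choose \<gamma>) * real ((l - 1) choose (\<gamma> - 1))))"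
        unfolding qH_def using 1
      proof (simp, intro disjI2 sum.cong refl)
        fix g assume g: "g \<in> {Suc 0..min l (m - Suc 0)}"
        have "m - g - 1 + 2 * l = (l + m - 1) + (l - g)" using g 1 by auto
        hence "(-1::real)^(m - g - 1) = (-1)^(l+m-1) * (-1)^(l-g)"
          by (metis power_add power_minus1_even mult_1_right)
        thus "(- 1) ^ (m - Suc g) * real (l - Suc 0 choose (g - Suc 0)) * real (m - Suc 0 choose g) =
         (- 1) ^ (l + m - Suc 0) * ((- 1) ^ (l - g) * real (m - Suc 0 choose g) * real (l - Suc 0 choose (g - Suc 0)))"
          by simp
      qed
      also have "\<dots> = (-1)^(l+m-1) * pH m l"
        unfolding pH_def using 1 by (simp add: sum_distrib_left mult_ac min.commute add.commute)
      finally show ?thesis .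
    qed
    thus ?thesis by (simp add: power_mult_distrib power_even_eq[symmetric] mult.commute)
  next
    case 2
    have "((- x)^n)^2 = ((x::real)^n)^2" for x n
      by (metis power_mult_distrib minus_mult_minus power2_eq_square)
    with 2 show ?thesis unfolding qH_def pH_def by simp
  qed (simp_all add: qH_def pH_def)
qed

text \<open>For l, m \<ge> 1 the sum defining pH is an alternating binomial convolution; extending the
  summation range to a common bound N makes its recurrence easy to prove.\<close>

definition alt_binom_sum :: "nat \<Rightarrow> nat \<Rightarrow> nat \<Rightarrow> int" where
  "alt_binom_sum N a b = (\<Sum>j<N. (-1)^j * int (a choose (j+1)) * int (b choose j))"

lemma pH_alt_binom_sum:
  assumes "a \<le> N"
  shows "pH (Suc a) (Suc b) = (1/sqrt 2)^(a+b+1) * (-1)^b * real_of_int (alt_binom_sum N a b)"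
proof -
  let ?K = "min a (Suc b)"
  have "pH (Suc a) (Suc b) = (1/sqrt 2)^(a+b+1) *
      (\<Sum>j<?K. (-1) ^ (Suc b - Suc j) * real (a choose Suc j) * real (b choose j))"
    unfolding pH_def by (simp add: sum.atLeast1_atMost_eq)
  also have "(\<Sum>j<?K. (-1) ^ (Suc b - Suc j) * real (a choose Suc j) * real (b choose j))
      = (\<Sum>j<N. (-1)^b * ((-1)^j * real (a choose Suc j) * real (b choose j)))"
  proof (rule sum.mono_neutral_cong_left)
    show "{..<?K} \<subseteq> {..<N}" using assms by auto
    show "\<forall>i\<in>{..<N} - {..<?K}. (-1)^b * ((-1)^i * real (a choose Suc i) * real (b choose i)) = 0"
      by auto
    fix j assume "j \<in> {..<?K}"
    hence "b = (b - j) + j" by simp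
    hence "(-1::real)^(b-j) = (-1)^b * (-1)^j"
      by (metis (no_types, lifting) mult.assoc mult.right_neutral power_minus1_even power_add mult_2)
    thus "(-1) ^ (Suc b - Suc j) * real (a choose Suc j) * real (b choose j)
       = (-1)^b * ((-1)^j * real (a choose Suc j) * real (b choose j))" by simp
  qed simp
  finally show ?thesis
    unfolding alt_binom_sum_def by (simp add: sum_distrib_left sum_divide_distrib mult_ac)
qed

lemma alternating_telescope:
  fixes G :: "nat \<Rightarrow> int"
  shows "(\<Sum>j<N. (-1)^j * (G j + G (Suc j))) = G 0 + (-1)^(N+1) * G N"
  by (induction N) (auto simp: algebra_simps)

text \<open>Pascal's rule in both arguments gives a four-term recurrence; the remainder telescopes.\<close>

lemma alt_binom_sum_rec:
  assumes "a < N"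
  shows "alt_binom_sum N (Suc a) (Suc b) - alt_binom_sum N (Suc a) b - alt_binom_sum N a (Suc b)
           + 2 * alt_binom_sum N a b = 0"
proof -
  define G where "G j = (if j = 0 then 0 else int (a choose j) * int (b choose (j - 1)))" for j
  have "alt_binom_sum N (Suc a) (Suc b) - alt_binom_sum N (Suc a) b - alt_binom_sum N a (Suc b)
          + 2 * alt_binom_sum N a b = (\<Sum>j<N. (-1)^j * (G j + G (Suc j)))"
    unfolding alt_binom_sum_def sum_subtractf[symmetric] sum_distrib_left sum.distrib[symmetric]
  proof (rule sum.cong[OF refl])
    fix j
    show "(-1) ^ j * int (Suc a choose (j + 1)) * int (Suc b choose j) -
         (-1) ^ j * int (Suc a choose (j + 1)) * int (b choose j) -
         (-1) ^ j * int (a choose (j + 1)) * int (Suc b choose j) +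
         2 * ((-1) ^ j * int (a choose (j + 1)) * int (b choose j)) =
         (-1) ^ j * (G j + G (Suc j))"
      by (cases j) (simp_all add: G_def algebra_simps)
  qed
  also have "\<dots> = 0" unfolding alternating_telescope using assms by (simp add: G_def)
  finally show ?thesis .
qed

text \<open>Only the term j = 0 survives when b = 0.\<close>

lemma alt_binom_sum_zero: "alt_binom_sum (Suc a) a 0 = int a"
proof -
  have "alt_binom_sum (Suc a) a 0 = (\<Sum>j<Suc a. if j = 0 then int a else 0)"
    unfolding alt_binom_sum_def by (intro sum.cong) auto
  thus ?thesis by simp
qed

lemma pH_zero_left [simp]: "pH 0 m = 0" unfolding pH_def by simp
lemma pH_one_left [simp]: "pH (Suc 0) (Suc m) = 0" unfolding pH_def by simp
lemma pH_zero_right [simp]: "pH (Suc a) 0 = (1/sqrt 2)^a" unfolding pH_def by simp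

lemma sqrt2_sqrt2_mult: "sqrt 2 * (sqrt 2 * x) = 2 * (x::real)"
  by (simp add: mult.assoc[symmetric])

lemma pH_one_right: "pH (Suc a) (Suc 0) = (1/sqrt 2)^(a+1) * a"
  by (subst pH_alt_binom_sum[where N="Suc a"]) (simp_all add: alt_binom_sum_zero)

lemma pH_recurrence:
  assumes "\<not> (l = 0 \<and> m = 0)"
  shows "sqrt 2 * pH (Suc l) (Suc m) = pH l (Suc m) + sqrt 2 * pH l m - pH (Suc l) m"
proof (cases l)
  case 0
  then show ?thesis using assms by (cases m) simp_all
next
  case l: (Suc a)
  show ?thesis
  proof (cases m)
    case 0
    show ?thesis unfolding l 0 pH_one_right pH_zero_right
      by (simp add: field_simps sqrt2_sqrt2_mult)
  next
    case m: (Suc b)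
    let ?N = "Suc (Suc a)" and ?F = "alt_binom_sum (Suc (Suc a))"
    define t where "t = (1/sqrt 2)^(a+b+2)"
    have h1: "pH (Suc (Suc a)) (Suc (Suc b)) = t / sqrt 2 * (-1)^(Suc b) * ?F (Suc a) (Suc b)"
      using pH_alt_binom_sum[of "Suc a" ?N "Suc b"] unfolding t_def by (simp add: field_simps)
    have h2: "pH (Suc a) (Suc (Suc b)) = t * (-1)^(Suc b) * ?F a (Suc b)"
      using pH_alt_binom_sum[of a ?N "Suc b"] unfolding t_def by simp
    have h3: "pH (Suc a) (Suc b) = t * sqrt 2 * (-1)^b * ?F a b"
      using pH_alt_binom_sum[of a ?N b] unfolding t_def by (simp add: field_simps)
    have h4: "pH (Suc (Suc a)) (Suc b) = t * (-1)^b * ?F (Suc a) b"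
      using pH_alt_binom_sum[of "Suc a" ?N b] unfolding t_def by simp
    have rec: "real_of_int (?F (Suc a) (Suc b)) = ?F (Suc a) b + ?F a (Suc b) - 2 * ?F a b"
      using alt_binom_sum_rec[of a ?N b] by simp
    show ?thesis unfolding l m h1 h2 h3 h4 rec
      by (simp add: field_simps sqrt2_sqrt2_mult)
  qed
qed

section \<open>The two-component recursion in Fourier space\<close>

text \<open>The recurrence is of second order; the auxiliary amplitude sH makes it first order:
  (pH, sH) at row l+1 (resp. column m+1) is obtained by a 2x2 matrix with entries +-1/sqrt 2.\<close>

definition sH :: "nat \<Rightarrow> nat \<Rightarrow> real" where
  "sH l m = sqrt 2 * pH (Suc l) m - pH l m"

lemma pH_Suc_eq: "pH (Suc l) m = (pH l m + sH l m) / sqrt 2"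
  unfolding sH_def by simp

lemma sH_Suc_eq:
  assumes "\<not> (l = 0 \<and> m = 0)"
  shows "sH l (Suc m) = (pH l m - sH l m) / sqrt 2"
proof -
  have "sH l (Suc m) = sqrt 2 * pH l m - pH (Suc l) m"
    unfolding sH_def using pH_recurrence[OF assms] by simp
  also have "\<dots> = (pH l m - sH l m) / sqrt 2"
    unfolding sH_def by (simp add: field_simps sqrt2_sqrt2_mult)
  finally show ?thesis .
qed

definition pH_hat :: "nat \<Rightarrow> real \<Rightarrow> complex" where
  "pH_hat n k = (\<Sum>l\<le>n. complex_of_real (pH l (n-l)) * cis (k * (real n - 2*real l)))"

definition sH_hat :: "nat \<Rightarrow> real \<Rightarrow> complex" where
  "sH_hat n k = (\<Sum>l\<le>n. complex_of_real (sH l (n-l)) * cis (k * (real n - 2*real l)))"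

lemma pH_hat_one: "pH_hat 1 k = cis (- k)"
  unfolding pH_hat_def by simp

lemma sH_hat_one: "sH_hat 1 k = 0"
  unfolding sH_hat_def sH_def by (simp add: field_simps)

lemma pH_hat_Suc:
  "pH_hat (Suc n) k = cis (- k) * (pH_hat n k + sH_hat n k) / sqrt 2"
proof -
  have "pH_hat (Suc n) k = (\<Sum>l\<le>n. complex_of_real (pH (Suc l) (n-l)) * cis (k * (real (Suc n) - 2*real (Suc l))))"
    unfolding pH_hat_def sum.atMost_Suc_shift by simp
  also have "\<dots> = (\<Sum>l\<le>n. cis (- k) * (complex_of_real (pH l (n-l)) * cis (k * (real n - 2*real l))
        + complex_of_real (sH l (n-l)) * cis (k * (real n - 2*real l))) / sqrt 2)"
  proof (rule sum.cong[OF refl])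
    fix l
    have "cis (k * (real (Suc n) - 2*real (Suc l))) = cis (-k) * cis (k * (real n - 2*real l))"
      by (simp add: cis_mult algebra_simps)
    thus "complex_of_real (pH (Suc l) (n-l)) * cis (k * (real (Suc n) - 2*real (Suc l))) =
      cis (- k) * (complex_of_real (pH l (n-l)) * cis (k * (real n - 2*real l))
        + complex_of_real (sH l (n-l)) * cis (k * (real n - 2*real l))) / sqrt 2"
      unfolding pH_Suc_eq by (simp add: field_simps)
  qed
  also have "\<dots> = cis (- k) * (pH_hat n k + sH_hat n k) / sqrt 2"
    unfolding pH_hat_def sH_hat_def
    by (simp only: sum.distrib[symmetric] sum_distrib_left sum_divide_distrib)
  finally show ?thesis .
qed

lemma sH_hat_Suc:
  assumes "n \<ge> 1"
  shows "sH_hat (Suc n) k = cis k * (pH_hat n k - sH_hat n k) / sqrt 2"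
proof -
  have "sH_hat (Suc n) k = (\<Sum>l\<le>n. complex_of_real (sH l (Suc n - l)) * cis (k * (real (Suc n) - 2*real l)))"
    unfolding sH_hat_def sum.atMost_Suc by (simp add: sH_def field_simps)
  also have "\<dots> = (\<Sum>l\<le>n. cis k * (complex_of_real (pH l (n-l)) * cis (k * (real n - 2*real l))
        - complex_of_real (sH l (n-l)) * cis (k * (real n - 2*real l))) / sqrt 2)"
  proof (rule sum.cong[OF refl])
    fix l assume l: "l \<in> {..n}"
    have c: "cis (k * (real (Suc n) - 2*real l)) = cis k * cis (k * (real n - 2*real l))"
      by (simp add: cis_mult algebra_simps)
    have "Suc n - l = Suc (n - l)" using l by auto
    moreover have "sH l (Suc (n - l)) = (pH l (n-l) - sH l (n-l)) / sqrt 2"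
      using assms l by (intro sH_Suc_eq) auto
    ultimately have s: "complex_of_real (sH l (Suc n - l))
        = (complex_of_real (pH l (n-l)) - complex_of_real (sH l (n-l))) / sqrt 2"
      by simp
    show "complex_of_real (sH l (Suc n - l)) * cis (k * (real (Suc n) - 2*real l)) =
      cis k * (complex_of_real (pH l (n-l)) * cis (k * (real n - 2*real l))
        - complex_of_real (sH l (n-l)) * cis (k * (real n - 2*real l))) / sqrt 2"
      unfolding s c by (simp add: algebra_simps)
  qed
  also have "\<dots> = cis k * (pH_hat n k - sH_hat n k) / sqrt 2"
    unfolding pH_hat_def sH_hat_def
    by (simp only: sum_subtractf[symmetric] sum_distrib_left sum_divide_distrib right_diff_distrib)
  finally show ?thesis .
qed


section \<open>Diagonalisation of the transfer matrix\<close>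

text \<open>Abstract form of the eigenvector computation: with E = e^{-ik}, C = e^{i om} and
  r (E - 1/E) = -(C - 1/C), the vectors built from a1, b1 and a2, b2 below are eigenvectors of
  the one-step map for the eigenvalues 1/C and -C, and they add up to the initial data.\<close>

lemma transfer_eigen_identities:
  fixes E Ei C Cb r d :: complex
  assumes EE: "E * Ei = 1" and CC: "C * Cb = 1" and rr: "2 * r * r = 1"
    and rel: "r * (E - Ei) = -(C - Cb)" and d: "d \<noteq> 0"
  shows "E * ((E + r*C)/d + r*C/d) * r = Cb * ((E + r*C)/d)"
    and "Ei * ((E + r*C)/d - r*C/d) * r = Cb * (r*C/d)"
    and "E * ((r*Cb - E)/d + r*Cb/d) * r = - C * ((r*Cb - E)/d)"
    and "Ei * ((r*Cb - E)/d - r*Cb/d) * r = - C * (r*Cb/d)"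
    and "Cb * ((E + r*C)/d) + (- C) * ((r*Cb - E)/d) = E * (C + Cb) / d"
    and "Cb * (r*C/d) + (- C) * (r*Cb/d) = 0"
proof -
  have A: "r*E*E - r = E*(Cb - C)"
  proof -
    have "r*E*E - r = E * (r * (E - Ei))" using EE by (simp add: algebra_simps)
    also have "\<dots> = E * (-(C - Cb))" by (simp only: rel)
    finally show ?thesis by simp
  qed
  show "E * ((E + r*C)/d + r*C/d) * r = Cb * ((E + r*C)/d)"
    using d A CC rr by (simp add: field_simps; simp add: algebra_simps)
  show "Ei * ((E + r*C)/d - r*C/d) * r = Cb * (r*C/d)"
    using d EE CC by (simp add: field_simps; simp add: algebra_simps)
  show "E * ((r*Cb - E)/d + r*Cb/d) * r = - C * ((r*Cb - E)/d)"
    using d A CC rr by (simp add: field_simps; simp add: algebra_simps)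
  show "Ei * ((r*Cb - E)/d - r*Cb/d) * r = - C * (r*Cb/d)"
    using d EE CC by (simp add: field_simps; simp add: algebra_simps)
  show "Cb * ((E + r*C)/d) + (- C) * ((r*Cb - E)/d) = E * (C + Cb) / d"
    using d CC by (simp add: field_simps; simp add: algebra_simps)
  show "Cb * (r*C/d) + (- C) * (r*Cb/d) = 0"
    using d by (simp add: field_simps)
qed

definition om :: "real \<Rightarrow> real" where
  "om k = arcsin (sin k / sqrt 2)"

text \<open>sin k / sqrt 2 stays inside (-1, 1), so arcsin is smooth there.\<close>

lemma sin_div_sqrt2_bound: "\<bar>sin k / sqrt 2\<bar> < 1"
proof -
  have "\<bar>sin k\<bar> \<le> 1" by (rule abs_sin_le_one)
  moreover have "1 < sqrt (2::real)" by simp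
  ultimately have "\<bar>sin k\<bar> < sqrt 2" by linarith
  then show ?thesis by (simp add: abs_div)
qed

lemma sin_div_sqrt2_bounds: "-1 < sin k / sqrt 2" "sin k / sqrt 2 < 1"
  using sin_div_sqrt2_bound[of k] unfolding abs_less_iff by auto

lemma sin_om: "sin (om k) = sin k / sqrt 2"
  unfolding om_def using sin_div_sqrt2_bounds[of k] by (intro sin_arcsin) auto

lemma cos_om: "cos (om k) = sqrt (1 - (sin k)^2 / 2)"
  unfolding om_def using sin_div_sqrt2_bounds[of k] by (subst cos_arcsin) (auto simp: power_divide)

lemma cos_om_pos: "cos (om k) > 0"
proof -
  have "(sin k)^2 \<le> 1" using abs_sin_le_one[of k] abs_square_le_1 by blast
  then show ?thesis unfolding cos_om by simp
qed

definition inv_sqrt2 :: complex where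
  "inv_sqrt2 = complex_of_real (1 / sqrt 2)"

lemma inv_sqrt2_sq: "2 * inv_sqrt2 * inv_sqrt2 = 1"
proof -
  have "inv_sqrt2 * inv_sqrt2 = complex_of_real (1/2)"
    unfolding inv_sqrt2_def of_real_mult[symmetric] by simp
  thus ?thesis by (simp add: mult_ac)
qed

lemma divide_sqrt2: "x / complex_of_real (sqrt 2) = x * inv_sqrt2"
  unfolding inv_sqrt2_def by (simp add: divide_inverse)

lemma dispersion_relation: "inv_sqrt2 * (cis (-k) - cis k) = -(cis (om k) - cis (- om k))"
  unfolding inv_sqrt2_def by (simp add: complex_eq_iff sin_om)

lemma two_cos_om: "complex_of_real (2 * cos (om k)) = cis (om k) + cis (- om k)"
  by (simp add: complex_eq_iff)

lemma two_cos_om_nonzero: "complex_of_real (2 * cos (om k)) \<noteq> 0"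
  using cos_om_pos[of k] by simp

text \<open>Coefficients of pH_hat (a1, a2) and sH_hat (b1, b2) along the two eigenvectors.\<close>

definition a1 :: "real \<Rightarrow> complex" where
  "a1 k = (cis (-k) + inv_sqrt2 * cis (om k)) / complex_of_real (2 * cos (om k))"
definition a2 :: "real \<Rightarrow> complex" where
  "a2 k = (inv_sqrt2 * cis (- om k) - cis (-k)) / complex_of_real (2 * cos (om k))"
definition b1 :: "real \<Rightarrow> complex" where
  "b1 k = inv_sqrt2 * cis (om k) / complex_of_real (2 * cos (om k))"
definition b2 :: "real \<Rightarrow> complex" where
  "b2 k = inv_sqrt2 * cis (- om k) / complex_of_real (2 * cos (om k))"

lemma closed_form_powers:
  assumes "n \<ge> 1"
  shows "pH_hat n k = cis (- om k) ^ n * a1 k + (- cis (om k)) ^ n * a2 k \<and>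
         sH_hat n k = cis (- om k) ^ n * b1 k + (- cis (om k)) ^ n * b2 k"
  using assms
proof (induction n rule: nat_induct_at_least)
  have EE: "cis (-k) * cis k = 1" by (simp add: cis_mult)
  have CC: "cis (om k) * cis (- om k) = 1" by (simp add: cis_mult)
  note e = transfer_eigen_identities[OF EE CC inv_sqrt2_sq dispersion_relation two_cos_om_nonzero]
  {
    case base
    show ?case unfolding pH_hat_one sH_hat_one a1_def a2_def b1_def b2_def
      using e(5) e(6) two_cos_om_nonzero[of k] by (simp add: two_cos_om[symmetric])
  next
    case (Suc n)
    have P: "pH_hat (Suc n) k = cis (- om k) ^ n * (cis (-k) * (a1 k + b1 k) * inv_sqrt2)
        + (- cis (om k)) ^ n * (cis (-k) * (a2 k + b2 k) * inv_sqrt2)"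
      unfolding pH_hat_Suc divide_sqrt2 using Suc(2) by (simp add: algebra_simps)
    have S: "sH_hat (Suc n) k = cis (- om k) ^ n * (cis k * (a1 k - b1 k) * inv_sqrt2)
        + (- cis (om k)) ^ n * (cis k * (a2 k - b2 k) * inv_sqrt2)"
      unfolding sH_hat_Suc[OF Suc(1)] divide_sqrt2 using Suc(2) by (simp add: algebra_simps)
    have q1: "cis (-k) * (a1 k + b1 k) * inv_sqrt2 = cis (- om k) * a1 k"
      using e(1) unfolding a1_def b1_def .
    have q2: "cis k * (a1 k - b1 k) * inv_sqrt2 = cis (- om k) * b1 k"
      using e(2) unfolding a1_def b1_def .
    have q3: "cis (-k) * (a2 k + b2 k) * inv_sqrt2 = - cis (om k) * a2 k"
      using e(3) unfolding a2_def b2_def .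
    have q4: "cis k * (a2 k - b2 k) * inv_sqrt2 = - cis (om k) * b2 k"
      using e(4) unfolding a2_def b2_def .
    show ?case unfolding P S q1 q2 q3 q4 by (simp add: mult_ac)
  }
qed

lemma pH_hat_closed_form:
  assumes "n \<ge> 1"
  shows "pH_hat n k = cis (- (real n * om k)) * a1 k + (-1)^n * cis (real n * om k) * a2 k"
proof -
  have "(- cis (om k)) ^ n = ((-1) * cis (om k)) ^ n" by simp
  also have "\<dots> = (-1)^n * cis (real n * om k)"
    by (simp only: power_mult_distrib Complex.DeMoivre)
  finally have "(- cis (om k)) ^ n = (-1)^n * cis (real n * om k)" .
  moreover have "cis (- om k) ^ n = cis (- (real n * om k))"
    unfolding Complex.DeMoivre by simp
  ultimately show ?thesis
    using closed_form_powers[OF assms, of k] by simp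
qed

section \<open>Parseval's identity\<close>

lemma has_vector_derivative_cis:
  assumes "(f has_real_derivative f') (at x within A)"
  shows "((\<lambda>x. cis (f x)) has_vector_derivative (complex_of_real f' * (\<i> * cis (f x)))) (at x within A)"
  unfolding has_vector_derivative_def
  using has_derivative_cis[OF assms[unfolded has_field_derivative_def]]
  by (rule has_derivative_eq_rhs) (auto simp: scaleR_conv_of_real mult_ac)

lemma integral_cis_orthogonal:
  "((\<lambda>k. cis (k * (2*real j - 2*real l))) has_integral (if j = l then 2*pi else 0)) {-pi..pi}"
proof (cases "j = l")
  case True
  then show ?thesis using has_integral_const_real[of "1::complex" "-pi" pi] by (simp add: scaleR_conv_of_real)
next
  case False
  define a where "a = 2*real j - 2*real l"
  have a0: "a \<noteq> 0" using False unfolding a_def by simp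
  define F where "F k = cis (k * a) / (\<i> * complex_of_real a)" for k
  have der: "(F has_vector_derivative cis (k * a)) (at k within {-pi..pi})" for k
  proof -
    have "((\<lambda>k. k * a) has_real_derivative a) (at k within {-pi..pi})"
      by (auto intro!: derivative_eq_intros)
    from has_vector_derivative_cis[OF this]
    have "((\<lambda>k. cis (k * a) * (1 / (\<i> * complex_of_real a))) has_vector_derivative
        (complex_of_real a * (\<i> * cis (k * a))) * (1 / (\<i> * complex_of_real a))) (at k within {-pi..pi})"
      by (rule has_vector_derivative_mult_left)
    thus ?thesis unfolding F_def using a0 by (simp add: field_simps)
  qed
  have "((\<lambda>k. cis (k * a)) has_integral (F pi - F (-pi))) {-pi..pi}"
    by (rule fundamental_theorem_of_calculus) (auto intro: der)
  moreover have "F pi = F (-pi)"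
  proof -
    have i: "real j - real l \<in> \<int>" by (metis Ints_diff Ints_of_nat)
    have "cis (pi * a) = 1" unfolding a_def using cis_multiple_2pi[OF i] by (simp add: algebra_simps)
    moreover have "cis (- pi * a) = 1" using calculation
      by (metis cis_cnj complex_cnj_one mult_minus_left)
    ultimately show ?thesis unfolding F_def by simp
  qed
  ultimately show ?thesis using False unfolding a_def by simp
qed

definition pH_char :: "nat \<Rightarrow> real \<Rightarrow> complex" where
  "pH_char n \<theta> = (\<Sum>l\<le>n. cis (\<theta> * (real n - 2*real l)) * complex_of_real ((pH l (n-l))^2))"

lemma parseval:
  "((\<lambda>k. pH_hat n k * cnj (pH_hat n (k - \<theta>))) has_integral (2*pi) * pH_char n \<theta>) {-pi..pi}"
proof -
  let ?p = "\<lambda>l. pH l (n-l)"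
  let ?t = "\<lambda>l j k. complex_of_real (?p l * ?p j) * cis (\<theta> * (real n - 2*real j))
                     * cis (k * (2*real j - 2*real l))"
  have eq: "pH_hat n k * cnj (pH_hat n (k - \<theta>)) = (\<Sum>l\<le>n. \<Sum>j\<le>n. ?t l j k)" for k
    unfolding pH_hat_def cnj_sum sum_product
  proof (intro sum.cong refl)
    fix l j
    have "cis (k * (real n - 2 * real l)) * cis (- ((k - \<theta>) * (real n - 2 * real j)))
        = cis (\<theta> * (real n - 2*real j)) * cis (k * (2*real j - 2*real l))"
      by (simp add: cis_mult algebra_simps)
    thus "complex_of_real (?p l) * cis (k * (real n - 2 * real l)) *
          cnj (complex_of_real (?p j) * cis ((k - \<theta>) * (real n - 2 * real j))) = ?t l j k"
      by (simp add: cis_cnj mult_ac)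
  qed
  have "((\<lambda>k. \<Sum>l\<le>n. \<Sum>j\<le>n. ?t l j k) has_integral (\<Sum>l\<le>n. \<Sum>j\<le>n. complex_of_real (?p l * ?p j)
          * cis (\<theta> * (real n - 2*real j)) * (if j = l then 2*pi else 0))) {-pi..pi}"
    by (intro has_integral_sum finite_atMost has_integral_mult_right integral_cis_orthogonal)
  moreover have "(\<Sum>l\<le>n. \<Sum>j\<le>n. complex_of_real (?p l * ?p j) * cis (\<theta> * (real n - 2*real j))
      * (if j = l then 2*pi else 0)) = (2*pi) * pH_char n \<theta>"
    unfolding pH_char_def sum_distrib_left
    by (intro sum.cong refl) (simp add: if_distrib sum.delta power2_eq_square mult_ac cong: if_cong)
  ultimately show ?thesis unfolding eq by simp
qed


section \<open>The group velocity\<close>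

text \<open>vel = om' is the group velocity of the walk.  It is continuous, bounded by 1/sqrt 2, and
  on [-pi, pi] it vanishes exactly at the stationary points k = +-pi/2.\<close>

definition vel :: "real \<Rightarrow> real" where
  "vel k = cos k / (sqrt 2 * cos (om k))"

lemma om_deriv: "(om has_real_derivative vel k) (at k)"
proof -
  have d1: "(arcsin has_real_derivative inverse (sqrt (1 - (sin k / sqrt 2)^2))) (at (sin k / sqrt 2))"
    by (rule DERIV_arcsin) (use sin_div_sqrt2_bounds[of k] in auto)
  have d2: "((\<lambda>k. sin k / sqrt 2) has_real_derivative cos k / sqrt 2) (at k)"
    by (rule DERIV_cdivide[OF DERIV_sin])
  have "sqrt (1 - (sin k / sqrt 2)^2) = cos (om k)"
    unfolding cos_om by (simp add: power_divide)
  with DERIV_chain2[OF d1 d2]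
  have "(om has_real_derivative inverse (cos (om k)) * (cos k / sqrt 2)) (at k)"
    unfolding om_def[abs_def] by simp
  moreover have "inverse (cos (om k)) * (cos k / sqrt 2) = vel k"
    unfolding vel_def by (simp add: divide_inverse inverse_mult_distrib mult_ac)
  ultimately show ?thesis by simp
qed

lemma om_cont: "continuous_on S om"
  by (rule continuous_at_imp_continuous_on) (auto intro: DERIV_isCont om_deriv)

lemma vel_cont: "continuous_on S vel"
  unfolding vel_def[abs_def]
  by (intro continuous_intros om_cont) (use cos_om_pos in \<open>auto simp: less_le\<close>)

lemma a1_cont: "continuous_on S a1"
  unfolding a1_def[abs_def] by (intro continuous_intros om_cont) (use two_cos_om_nonzero in auto)

lemma a2_cont: "continuous_on S a2"
  unfolding a2_def[abs_def] by (intro continuous_intros om_cont) (use two_cos_om_nonzero in auto)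

lemma om_mvt: "\<exists>z. \<bar>z - k\<bar> \<le> \<bar>h\<bar> \<and> om k - om (k - h) = h * vel z"
proof (cases h "0::real" rule: linorder_cases)
  case less
  obtain z where "k < z" "z < k - h" "om (k - h) - om k = (k - h - k) * vel z"
    using MVT2[of k "k - h" om vel] less om_deriv by auto
  thus ?thesis by (intro exI[of _ z]) (auto simp: algebra_simps)
next
  case greater
  obtain z where "k - h < z" "z < k" "om k - om (k - h) = (k - (k - h)) * vel z"
    using MVT2[of "k - h" k om vel] greater om_deriv by auto
  thus ?thesis by (intro exI[of _ z]) (auto simp: algebra_simps)
qed auto

lemma vel_nonzero_away_from_stationary:
  assumes d: "0 < d" and k: "k \<in> {-pi..-pi/2-d} \<union> {-pi/2+d..pi/2-d} \<union> {pi/2+d..pi}"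
  shows "vel k \<noteq> 0"
proof -
  have "cos k \<noteq> 0"
  proof -
    consider "k \<in> {-pi..-pi/2-d}" | "k \<in> {-pi/2+d..pi/2-d}" | "k \<in> {pi/2+d..pi}" using k by blast
    then show ?thesis
    proof cases
      case 1
      then have "0 < cos (k + pi)" using d by (intro cos_gt_zero_pi) auto
      then show ?thesis by simp
    next
      case 2
      then have "0 < cos k" using d by (intro cos_gt_zero_pi) auto
      then show ?thesis by simp
    next
      case 3
      then have "0 < cos (k - pi)" using d by (intro cos_gt_zero_pi) auto
      then show ?thesis by simp
    qed
  qed
  then show ?thesis unfolding vel_def using cos_om_pos[of k] by simp
qed

section \<open>Uniform convergence of the diagonal terms\<close>

lemma norm_cis_diff: "norm (cis x - cis y) \<le> \<bar>x - y\<bar>"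
proof -
  have "norm (cis t - 1) \<le> \<bar>t\<bar>" for t :: real
  proof (rule power2_le_imp_le)
    have "(norm (cis t - 1))^2 = (cos t - 1)^2 + (sin t)^2" by (simp add: cmod_power2)
    also have "\<dots> = 2 - 2 * cos t" using sin_cos_squared_add[of t] by (simp add: power2_diff)
    also have "\<dots> = 4 * (sin (t/2))^2" using cos_double_sin[of "t/2"] by simp
    also have "\<dots> \<le> 4 * (t/2)^2"
      using abs_sin_x_le_abs_x[of "t/2"] unfolding abs_le_square_iff by simp
    finally show "(norm (cis t - 1))^2 \<le> \<bar>t\<bar>^2" by (simp add: power_divide)
  qed simp
  moreover have "norm (cis x - cis y) = norm (cis y * (cis (x - y) - 1))"
    by (simp add: algebra_simps cis_mult)
  then have "norm (cis x - cis y) = norm (cis (x - y) - 1)"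
    by (simp add: norm_mult)
  ultimately show ?thesis by simp
qed

lemma eventually_step_small:
  assumes "d > 0"
  shows "eventually (\<lambda>n. 1 \<le> n \<and> \<bar>\<xi> / real n\<bar> < d) sequentially"
proof -
  have "eventually (\<lambda>n. dist (\<xi> / real n) 0 < d) sequentially"
    using lim_const_over_n[of \<xi>] assms by (rule tendstoD)
  moreover have "eventually (\<lambda>n::nat. 1 \<le> n) sequentially" by (rule eventually_ge_at_top)
  ultimately show ?thesis by eventually_elim auto
qed

text \<open>cis is 1-Lipschitz, so it preserves uniform convergence of real phases.\<close>

lemma uniform_limit_cis:
  assumes "uniform_limit S f g F"
  shows "uniform_limit S (\<lambda>n x. cis (f n x)) (\<lambda>x. cis (g x)) F"
proof (rule uniform_limitI)
  fix e :: real assume "e > 0"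
  with assms have "\<forall>\<^sub>F n in F. \<forall>x\<in>S. dist (f n x) (g x) < e" by (rule uniform_limitD)
  then show "\<forall>\<^sub>F n in F. \<forall>x\<in>S. dist (cis (f n x)) (cis (g x)) < e"
    by eventually_elim (auto simp: dist_norm dist_real_def intro: le_less_trans[OF norm_cis_diff])
qed

lemma uniform_limit_shift:
  fixes f :: "real \<Rightarrow> 'a::metric_space"
  assumes f: "continuous_on {-pi-1..pi+1} f"
  shows "uniform_limit {-pi..pi} (\<lambda>n k. f (k - \<xi> / real n)) f sequentially"
proof -
  have "uniform_limit {-pi..pi} (\<lambda>n k. k - \<xi> / real n) (\<lambda>k. k) sequentially"
  proof (rule uniform_limitI)
    fix e :: real assume e: "e > 0"
    show "\<forall>\<^sub>F n in sequentially. \<forall>k\<in>{-pi..pi}. dist (k - \<xi> / real n) k < e"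
      using eventually_step_small[OF e, of \<xi>] by eventually_elim (simp add: dist_real_def)
  qed
  moreover have "uniformly_continuous_on {-pi-1..pi+1} f"
    by (rule compact_uniformly_continuous[OF f compact_Icc])
  moreover have "\<forall>\<^sub>F n in sequentially. \<forall>k\<in>{-pi..pi}. k - \<xi> / real n \<in> {-pi-1..pi+1}"
    using eventually_step_small[OF zero_less_one, of \<xi>]
  proof eventually_elim
    case (elim n)
    define h where "h = \<xi> / real n"
    have "-1 < h" "h < 1" using elim unfolding h_def[symmetric] abs_less_iff by auto
    then show ?case unfolding h_def[symmetric] by auto
  qed
  ultimately show ?thesis by (rule uniform_limit_compose_uniformly_continuous_on) simp
qed

lemma phase_difference_mvt:
  assumes "n \<ge> 1"
  shows "\<exists>z. \<bar>z - k\<bar> \<le> \<bar>\<xi> / real n\<bar> \<and> real n * (om k - om (k - \<xi> / real n)) = \<xi> * vel z"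
proof -
  obtain z where z: "\<bar>z - k\<bar> \<le> \<bar>\<xi> / real n\<bar>" "om k - om (k - \<xi> / real n) = \<xi> / real n * vel z"
    using om_mvt by blast
  have "real n * (\<xi> / real n * vel z) = \<xi> * vel z" using assms by simp
  with z show ?thesis by auto
qed

lemma uniform_limit_phase:
  "uniform_limit {-pi..pi} (\<lambda>n k. real n * (om k - om (k - \<xi> / real n))) (\<lambda>k. \<xi> * vel k) sequentially"
proof (rule uniform_limitI)
  fix e :: real assume e: "e > 0"
  let ?B = "{-pi-1..pi+1}"
  have "uniformly_continuous_on ?B vel"
    by (rule compact_uniformly_continuous[OF vel_cont compact_Icc])
  moreover have "e / (\<bar>\<xi>\<bar> + 1) > 0" using e by simp
  ultimately obtain d where d: "d > 0"
    and dv: "\<And>x y. x \<in> ?B \<Longrightarrow> y \<in> ?B \<Longrightarrow> dist y x < d \<Longrightarrow> dist (vel y) (vel x) < e / (\<bar>\<xi>\<bar> + 1)"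
    unfolding uniformly_continuous_on_def by metis
  have "eventually (\<lambda>n. 1 \<le> n \<and> \<bar>\<xi> / real n\<bar> < min d 1) sequentially"
    using d by (intro eventually_step_small) simp
  then show "\<forall>\<^sub>F n in sequentially. \<forall>k\<in>{-pi..pi}.
      dist (real n * (om k - om (k - \<xi> / real n))) (\<xi> * vel k) < e"
  proof eventually_elim
    case (elim n)
    show ?case
    proof
      fix k :: real assume k: "k \<in> {-pi..pi}"
      obtain z where z: "\<bar>z - k\<bar> \<le> \<bar>\<xi> / real n\<bar>"
          "real n * (om k - om (k - \<xi> / real n)) = \<xi> * vel z"
        using phase_difference_mvt elim by blast
      have "\<bar>\<xi> / real n\<bar> < 1" "\<bar>\<xi> / real n\<bar> < d" using elim by auto
      then have zk: "\<bar>z - k\<bar> < 1" "\<bar>z - k\<bar> < d" using z(1) by linarith+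
      have "z \<in> ?B" "k \<in> ?B" using zk(1) k unfolding abs_less_iff by auto
      then have "dist (vel z) (vel k) < e / (\<bar>\<xi>\<bar> + 1)"
        using zk(2) by (intro dv) (auto simp: dist_real_def)
      then have "\<bar>\<xi>\<bar> * \<bar>vel z - vel k\<bar> \<le> \<bar>\<xi>\<bar> * (e / (\<bar>\<xi>\<bar> + 1))"
        by (intro mult_left_mono) (auto simp: dist_real_def)
      also have "\<dots> < e" using e by (simp add: field_simps)
      finally show "dist (real n * (om k - om (k - \<xi> / real n))) (\<xi> * vel k) < e"
        unfolding z(2) dist_real_def right_diff_distrib[symmetric] abs_mult .
    qed
  qed
qed

text \<open>The products of amplitudes appearing in pH_hat n k * conj (pH_hat n (k - theta)), with phase
  difference n (om k - om (k - theta)) and sign sigma, and their limits as theta = xi/n.\<close>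

definition osc_term ::
    "real \<Rightarrow> (real \<Rightarrow> complex) \<Rightarrow> (real \<Rightarrow> complex) \<Rightarrow> nat \<Rightarrow> real \<Rightarrow> real \<Rightarrow> complex" where
  "osc_term \<sigma> A B n \<theta> k = cis (\<sigma> * (real n * (om k - om (k - \<theta>)))) * A k * cnj (B (k - \<theta>))"

definition osc_limit :: "real \<Rightarrow> real \<Rightarrow> (real \<Rightarrow> complex) \<Rightarrow> (real \<Rightarrow> complex) \<Rightarrow> real \<Rightarrow> complex" where
  "osc_limit \<sigma> \<xi> A B k = cis (\<sigma> * (\<xi> * vel k)) * A k * cnj (B k)"

lemma continuous_on_osc_term:
  assumes A: "continuous_on UNIV A" and B: "continuous_on UNIV B"
  shows "continuous_on S (osc_term \<sigma> A B n \<theta>)"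
proof -
  have "continuous_on S (\<lambda>k. om (k - \<theta>))" "continuous_on S (\<lambda>k. B (k - \<theta>))"
    by (auto intro!: continuous_on_compose2[OF om_cont] continuous_on_compose2[OF B] continuous_intros)
  then show ?thesis unfolding osc_term_def[abs_def]
    by (intro continuous_intros om_cont continuous_on_subset[OF A]) auto
qed

lemma continuous_on_osc_limit:
  assumes A: "continuous_on UNIV A" and B: "continuous_on UNIV B"
  shows "continuous_on S (osc_limit \<sigma> \<xi> A B)"
  unfolding osc_limit_def[abs_def]
  by (intro continuous_intros vel_cont continuous_on_subset[OF A] continuous_on_subset[OF B]) auto

lemma uniform_limit_osc_term:
  assumes A: "continuous_on UNIV A" and B: "continuous_on UNIV B"
  shows "uniform_limit {-pi..pi} (\<lambda>n. osc_term \<sigma> A B n (\<xi> / real n)) (osc_limit \<sigma> \<xi> A B) sequentially"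
proof -
  have bdd: "bounded (f ` {-pi..pi})" if "continuous_on {-pi..pi} f" for f :: "real \<Rightarrow> complex"
    by (intro compact_imp_bounded compact_continuous_image that compact_Icc)
  have "uniform_limit {-pi..pi} (\<lambda>n k. \<sigma> * (real n * (om k - om (k - \<xi> / real n))))
      (\<lambda>k. \<sigma> * (\<xi> * vel k)) sequentially"
    by (rule bounded_linear.uniform_limit[OF bounded_linear_mult_right uniform_limit_phase])
  then have phase: "uniform_limit {-pi..pi}
      (\<lambda>n k. cis (\<sigma> * (real n * (om k - om (k - \<xi> / real n))))) (\<lambda>k. cis (\<sigma> * (\<xi> * vel k))) sequentially"
    by (rule uniform_limit_cis)
  have shift: "uniform_limit {-pi..pi} (\<lambda>n k. cnj (B (k - \<xi> / real n))) (\<lambda>k. cnj (B k)) sequentially"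
    by (rule bounded_linear.uniform_limit[OF bounded_linear_cnj uniform_limit_shift])
       (rule continuous_on_subset[OF B], simp)
  have "uniform_limit {-pi..pi} (\<lambda>n k. cis (\<sigma> * (real n * (om k - om (k - \<xi> / real n)))) * A k)
      (\<lambda>k. cis (\<sigma> * (\<xi> * vel k)) * A k) sequentially"
    by (rule uniform_lim_mult[OF phase uniform_limit_const])
       (auto intro!: bdd continuous_intros vel_cont continuous_on_subset[OF A])
  then have "uniform_limit {-pi..pi}
      (\<lambda>n k. cis (\<sigma> * (real n * (om k - om (k - \<xi> / real n)))) * A k * cnj (B (k - \<xi> / real n)))
      (\<lambda>k. cis (\<sigma> * (\<xi> * vel k)) * A k * cnj (B k)) sequentially"
    by (rule uniform_lim_mult[OF _ shift])
       (auto intro!: bdd continuous_intros vel_cont continuous_on_subset[OF A] continuous_on_subset[OF B])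
  then show ?thesis unfolding osc_term_def[abs_def] osc_limit_def[abs_def] .
qed

lemma integral_osc_term_limit:
  assumes A: "continuous_on UNIV A" and B: "continuous_on UNIV B"
  shows "(\<lambda>n. integral {-pi..pi} (osc_term \<sigma> A B n (\<xi> / real n)))
           \<longlonglongrightarrow> integral {-pi..pi} (osc_limit \<sigma> \<xi> A B)"
proof -
  obtain I J where I: "\<And>n. (osc_term \<sigma> A B n (\<xi> / real n) has_integral I n) {-pi..pi}"
    and J: "(osc_limit \<sigma> \<xi> A B has_integral J) {-pi..pi}" and IJ: "I \<longlonglongrightarrow> J"
    using uniform_limit_integral[OF uniform_limit_osc_term[OF A B] continuous_on_osc_term[OF A B]
        trivial_limit_sequentially] by metis
  show ?thesis using IJ unfolding integral_unique[OF I] integral_unique[OF J] .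
qed


section \<open>A Riemann-Lebesgue lemma for the phase om\<close>

lemma has_vector_derivative_oscillatory:
  fixes g :: "real \<Rightarrow> complex"
  assumes "(g has_vector_derivative g') (at k)"
  shows "((\<lambda>k. cis (M * om k) * g k) has_vector_derivative
           cis (M * om k) * g' + \<i> * complex_of_real M * (cis (M * om k) * complex_of_real (vel k) * g k)) (at k)"
proof -
  have "((\<lambda>k. M * om k) has_real_derivative M * vel k) (at k)"
    using om_deriv by (auto intro!: derivative_eq_intros)
  from has_vector_derivative_mult[OF has_vector_derivative_cis[OF this] assms]
  show ?thesis by (simp add: algebra_simps)
qed

text \<open>Integration by parts: since (e^{iM om})' = i M om' e^{iM om}, an integral of
  e^{iM om} om' g is O(1/M) for differentiable g.\<close>

lemma oscillatory_integral_by_parts: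
  fixes g g' :: "real \<Rightarrow> complex"
  assumes ab: "a \<le> b" and M: "M \<noteq> 0"
    and g: "\<And>k. (g has_vector_derivative g' k) (at k)" and g': "continuous_on {a..b} g'"
    and gG: "\<And>k. k \<in> {a..b} \<Longrightarrow> norm (g k) \<le> G"
    and g'G: "\<And>k. k \<in> {a..b} \<Longrightarrow> norm (g' k) \<le> G'"
  shows "norm (integral {a..b} (\<lambda>k. cis (M * om k) * complex_of_real (vel k) * g k))
           \<le> (2 * G + (b - a) * G') / \<bar>M\<bar>"
proof -
  define c where "c = 1 / (\<i> * complex_of_real M)"
  define F where "F k = cis (M * om k) * g k * c" for k
  let ?f = "\<lambda>k. cis (M * om k) * complex_of_real (vel k) * g k"
  let ?h = "\<lambda>k. cis (M * om k) * g' k * c"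
  have "(F has_vector_derivative (?f k + ?h k)) (at k)" for k
  proof -
    have "(F has_vector_derivative (cis (M * om k) * g' k + \<i> * complex_of_real M * ?f k) * c) (at k)"
      unfolding F_def by (rule has_vector_derivative_mult_left[OF has_vector_derivative_oscillatory[OF g]])
    moreover have "(cis (M * om k) * g' k + \<i> * complex_of_real M * ?f k) * c = ?f k + ?h k"
      unfolding c_def using M by (simp add: field_simps)
    ultimately show ?thesis by simp
  qed
  then have fh: "((\<lambda>k. ?f k + ?h k) has_integral (F b - F a)) {a..b}"
    using ab by (intro fundamental_theorem_of_calculus) (auto intro: has_vector_derivative_at_within)
  have hc: "continuous_on {a..b} ?h" by (intro continuous_intros om_cont g')
  from has_integral_diff[OF fh integrable_integral[OF integrable_continuous_interval[OF hc]]]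
  have "(?f has_integral (F b - F a - integral {a..b} ?h)) {a..b}" by simp
  then have "integral {a..b} ?f = F b - F a - integral {a..b} ?h"
    by (rule integral_unique)
  also have "norm \<dots> \<le> norm (F b - F a) + norm (integral {a..b} ?h)"
    by (rule norm_triangle_ineq4)
  also have "\<dots> \<le> norm (F b) + norm (F a) + norm (integral {a..b} ?h)"
    using norm_triangle_ineq4[of "F b" "F a"] by simp
  also have "\<dots> \<le> G / \<bar>M\<bar> + G / \<bar>M\<bar> + G' / \<bar>M\<bar> * (b - a)"
  proof (intro add_mono)
    show "norm (F b) \<le> G / \<bar>M\<bar>" "norm (F a) \<le> G / \<bar>M\<bar>"
      unfolding F_def c_def using gG ab by (auto simp: norm_mult norm_divide intro!: divide_right_mono)
    show "norm (integral {a..b} ?h) \<le> G' / \<bar>M\<bar> * (b - a)"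
      using ab hc by (rule integral_bound)
        (use g'G in \<open>auto simp: c_def norm_mult norm_divide intro!: divide_right_mono\<close>)
  qed
  also have "\<dots> = (2 * G + (b - a) * G') / \<bar>M\<bar>"
    using M by (simp add: field_simps)
  finally show ?thesis .
qed

lemma continuous_on_bounded:
  fixes f :: "real \<Rightarrow> 'a::real_normed_vector"
  assumes "continuous_on {a..b} f"
  obtains C where "C > 0" "\<And>k. k \<in> {a..b} \<Longrightarrow> norm (f k) \<le> C"
  using compact_imp_bounded[OF compact_continuous_image[OF assms compact_Icc]]
  by (auto simp: bounded_pos)

lemma oscillatory_integral_polynomial:
  fixes p :: "real \<Rightarrow> complex"
  assumes ab: "a \<le> b" and p: "polynomial_function p"
  shows "((\<lambda>M. integral {a..b} (\<lambda>k. cis (M * om k) * complex_of_real (vel k) * p k)) \<longlongrightarrow> 0) at_infinity"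
proof -
  obtain p' where p': "polynomial_function p'" "\<And>k. (p has_vector_derivative p' k) (at k)"
    using has_vector_derivative_polynomial_function[OF p] by blast
  have pc: "continuous_on S p" "continuous_on S p'" for S
    using continuous_on_polymonial_function p p'(1) by blast+
  obtain P where P: "\<And>k. k \<in> {a..b} \<Longrightarrow> norm (p k) \<le> P"
    using continuous_on_bounded[OF pc(1)] by blast
  obtain P' where P': "\<And>k. k \<in> {a..b} \<Longrightarrow> norm (p' k) \<le> P'"
    using continuous_on_bounded[OF pc(2)] by blast
  define K where "K = 2 * P + (b - a) * P'"
  have "\<forall>\<^sub>F M in at_infinity.
      norm (integral {a..b} (\<lambda>k. cis (M * om k) * complex_of_real (vel k) * p k)) \<le> K * norm (inverse M)"
  proof (rule eventually_at_infinityI)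
    fix M :: real assume "1 \<le> norm M"
    then have "M \<noteq> 0" by auto
    then show "norm (integral {a..b} (\<lambda>k. cis (M * om k) * complex_of_real (vel k) * p k)) \<le> K * norm (inverse M)"
      using oscillatory_integral_by_parts[OF ab _ p'(2) pc(2) P P'] unfolding K_def
      by (simp add: divide_inverse abs_inverse)
  qed
  moreover have "((\<lambda>M::real. K * norm (inverse M)) \<longlongrightarrow> 0) at_infinity"
    by (intro tendsto_mult_right_zero tendsto_norm_zero tendsto_inverse_0)
  ultimately show ?thesis by (rule Lim_null_comparison)
qed

text \<open>Away from stationary points of om, oscillatory integrals with continuous amplitude
  tend to 0: approximate D / om' uniformly by a polynomial.\<close>

lemma oscillatory_integral_nonstationary:
  fixes D :: "real \<Rightarrow> complex"
  assumes ab: "a \<le> b" and D: "continuous_on {a..b} D" and v: "\<And>k. k \<in> {a..b} \<Longrightarrow> vel k \<noteq> 0"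
  shows "((\<lambda>M. integral {a..b} (\<lambda>k. cis (M * om k) * D k)) \<longlongrightarrow> 0) at_infinity"
proof (rule tendstoI)
  fix e :: real assume e: "e > 0"
  define E where "E k = D k / complex_of_real (vel k)" for k
  have Ec: "continuous_on {a..b} E"
    unfolding E_def using v by (intro continuous_intros D vel_cont) auto
  obtain W where W: "W > 0" "\<And>k. k \<in> {a..b} \<Longrightarrow> norm (vel k) \<le> W"
    using continuous_on_bounded[OF vel_cont] by blast
  have ab1: "0 < b - a + 1" using ab by simp
  define \<eta> where "\<eta> = e / (2 * (b - a + 1)) / W"
  have \<eta>: "\<eta> > 0" unfolding \<eta>_def using e W ab1 by simp
  obtain p where p: "polynomial_function p" "\<forall>k\<in>{a..b}. norm (E k - p k) < \<eta>"
    using Stone_Weierstrass_polynomial_function[OF compact_Icc Ec \<eta>] by blast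
  have pc: "continuous_on {a..b} p" using continuous_on_polymonial_function p(1) by blast
  let ?main = "\<lambda>M k. cis (M * om k) * complex_of_real (vel k) * p k"
  let ?err = "\<lambda>M k. cis (M * om k) * complex_of_real (vel k) * (E k - p k)"
  have err: "norm (integral {a..b} (?err M)) < e / 2" for M
  proof -
    have "norm (integral {a..b} (?err M)) \<le> W * \<eta> * (b - a)"
    proof (rule integral_bound[OF ab])
      show "continuous_on {a..b} (?err M)" by (intro continuous_intros om_cont vel_cont pc Ec)
      fix k assume k: "k \<in> {a..b}"
      have "norm (?err M k) = norm (vel k) * norm (E k - p k)" by (simp add: norm_mult)
      also have "\<dots> \<le> W * \<eta>" using W p(2) k by (intro mult_mono) (auto intro: less_imp_le)
      finally show "norm (?err M k) \<le> W * \<eta>" .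
    qed
    also have "W * \<eta> = e / (2 * (b - a + 1))" unfolding \<eta>_def using W by simp
    also have "e / (2 * (b - a + 1)) * (b - a) < e / 2" using e ab1 by (simp add: field_simps)
    finally show ?thesis .
  qed
  have "\<forall>\<^sub>F M in at_infinity. norm (integral {a..b} (?main M)) < e / 2"
    using tendstoD[OF oscillatory_integral_polynomial[OF ab p(1)], of "e / 2"] e by simp
  then show "\<forall>\<^sub>F M in at_infinity. dist (integral {a..b} (\<lambda>k. cis (M * om k) * D k)) 0 < e"
  proof eventually_elim
    case (elim M)
    have "integral {a..b} (\<lambda>k. cis (M * om k) * D k) = integral {a..b} (\<lambda>k. ?main M k + ?err M k)"
      by (rule integral_cong) (use v in \<open>auto simp: E_def field_simps\<close>)
    also have "\<dots> = integral {a..b} (?main M) + integral {a..b} (?err M)"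
      by (intro Henstock_Kurzweil_Integration.integral_add integrable_continuous_interval
          continuous_intros om_cont vel_cont pc Ec)
    finally show ?case
      using elim err[of M] norm_triangle_ineq[of "integral {a..b} (?main M)" "integral {a..b} (?err M)"]
      by (simp add: dist_norm)
  qed
qed

lemma oscillatory_integral_off_stationary:
  fixes D :: "real \<Rightarrow> complex"
  assumes D: "continuous_on {-pi..pi} D" and d: "0 < d" and ab: "-pi \<le> a" "a \<le> b" "b \<le> pi"
    and sub: "{a..b} \<subseteq> {-pi..-pi/2-d} \<union> {-pi/2+d..pi/2-d} \<union> {pi/2+d..pi}"
  shows "((\<lambda>M. integral {a..b} (\<lambda>k. cis (M * om k) * D k)) \<longlongrightarrow> 0) at_infinity"
  using ab sub vel_nonzero_away_from_stationary[OF d]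
  by (intro oscillatory_integral_nonstationary continuous_on_subset[OF D]) auto

text \<open>On [-pi, pi] the stationary points +-pi/2 are cut out by intervals of length 2d whose
  contribution is O(d); the remaining three intervals are covered by the previous lemma.\<close>

lemma oscillatory_integral_vanishes:
  fixes D :: "real \<Rightarrow> complex"
  assumes D: "continuous_on {-pi..pi} D"
  shows "((\<lambda>M. integral {-pi..pi} (\<lambda>k. cis (M * om k) * D k)) \<longlongrightarrow> 0) at_infinity"
proof (rule tendstoI)
  fix e :: real assume e: "e > 0"
  let ?f = "\<lambda>M k. cis (M * om k) * D k"
  obtain C where C: "C > 0" "\<And>k. k \<in> {-pi..pi} \<Longrightarrow> norm (D k) \<le> C"
    using continuous_on_bounded[OF D] by blast
  define d where "d = min (pi/4) (e / (8 * C))"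
  have d: "0 < d" "d \<le> pi/4" "C * d \<le> e / 8"
    unfolding d_def using e C by (auto simp: min_def field_simps)
  have pi: "0 < pi" by simp
  have near: "norm (integral {a..b} (?f M)) \<le> C * (b - a)"
    if "-pi \<le> a" "a \<le> b" "b \<le> pi" for a b M
  proof (rule integral_bound[OF that(2)])
    show "continuous_on {a..b} (?f M)"
      using that by (intro continuous_intros om_cont continuous_on_subset[OF D]) auto
    fix k assume "k \<in> {a..b}"
    then show "norm (?f M k) \<le> C" using C that by (auto simp: norm_mult)
  qed
  have far: "\<forall>\<^sub>F M in at_infinity. norm (integral {a..b} (?f M)) < e / 6"
    if "-pi \<le> a" "a \<le> b" "b \<le> pi"
      and "{a..b} \<subseteq> {-pi..-pi/2-d} \<union> {-pi/2+d..pi/2-d} \<union> {pi/2+d..pi}" for a b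
    using tendstoD[OF oscillatory_integral_off_stationary[OF D d(1) that], of "e / 6"] e by simp
  have "\<forall>\<^sub>F M in at_infinity. norm (integral {-pi..-pi/2-d} (?f M)) < e / 6
      \<and> norm (integral {-pi/2+d..pi/2-d} (?f M)) < e / 6 \<and> norm (integral {pi/2+d..pi} (?f M)) < e / 6"
    using d pi by (intro eventually_conj far) auto
  then show "\<forall>\<^sub>F M in at_infinity. dist (integral {-pi..pi} (?f M)) 0 < e"
  proof eventually_elim
    case (elim M)
    have int: "?f M integrable_on {a..b}" if "-pi \<le> a" "b \<le> pi" for a b
      using that by (intro integrable_continuous_interval continuous_intros om_cont
          continuous_on_subset[OF D]) auto
    have "integral {-pi..pi} (?f M) = integral {-pi..-pi/2-d} (?f M) + integral {-pi/2-d..-pi/2+d} (?f M)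
        + integral {-pi/2+d..pi/2-d} (?f M) + integral {pi/2-d..pi/2+d} (?f M) + integral {pi/2+d..pi} (?f M)"
      using d pi by (simp add: Henstock_Kurzweil_Integration.integral_combine int)
    moreover have "norm (integral {-pi/2-d..-pi/2+d} (?f M)) \<le> C * (2 * d)"
      "norm (integral {pi/2-d..pi/2+d} (?f M)) \<le> C * (2 * d)"
      using near[of "-pi/2-d" "-pi/2+d" M] near[of "pi/2-d" "pi/2+d" M] d pi by auto
    ultimately have "norm (integral {-pi..pi} (?f M)) < e / 6 + C * (2 * d) + e / 6 + C * (2 * d) + e / 6"
      using elim norm_triangle_ineq by (smt (verit))
    then show ?case using d(3) by simp
  qed
qed

section \<open>Limit of the correlation integral\<close>

lemma correlation_decomposition:
  assumes n: "n \<ge> 1"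
  shows "pH_hat n k * cnj (pH_hat n (k - \<theta>)) = osc_term (-1) a1 a1 n \<theta> k + osc_term 1 a2 a2 n \<theta> k
     + (-1)^n * (cis ((-2) * real n * om k) * osc_term 1 a1 a2 n \<theta> k
                 + cis (2 * real n * om k) * osc_term (-1) a2 a1 n \<theta> k)"
proof -
  define x where "x = real n * om k"
  define y where "y = real n * om (k - \<theta>)"
  have P1: "pH_hat n k = cis (-x) * a1 k + (-1)^n * cis x * a2 k"
    unfolding x_def by (rule pH_hat_closed_form[OF n])
  have P2: "cnj (pH_hat n (k - \<theta>)) = cis y * cnj (a1 (k - \<theta>)) + (-1)^n * cis (-y) * cnj (a2 (k - \<theta>))"
    unfolding pH_hat_closed_form[OF n] y_def by (simp add: cis_cnj)
  have "osc_term (-1) a1 a1 n \<theta> k = cis (-x) * cis y * a1 k * cnj (a1 (k - \<theta>))"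
    "osc_term 1 a2 a2 n \<theta> k = cis x * cis (-y) * a2 k * cnj (a2 (k - \<theta>))"
    "cis ((-2) * real n * om k) * osc_term 1 a1 a2 n \<theta> k = cis (-x) * cis (-y) * a1 k * cnj (a2 (k - \<theta>))"
    "cis (2 * real n * om k) * osc_term (-1) a2 a1 n \<theta> k = cis x * cis y * a2 k * cnj (a1 (k - \<theta>))"
    unfolding osc_term_def x_def y_def by (simp_all add: cis_mult algebra_simps)
  moreover have "((-1::complex)^n) * (-1)^n = 1"
    by (simp add: power_mult_distrib[symmetric])
  ultimately show ?thesis
    unfolding P1 P2 by (simp add: algebra_simps)
qed

lemma filterlim_scaled_nat_at_infinity:
  assumes "c \<noteq> 0"
  shows "filterlim (\<lambda>n::nat. c * real n) at_infinity sequentially"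
proof -
  have "filterlim (\<lambda>n::nat. \<bar>c\<bar> * real n) at_top sequentially"
    using assms by (intro filterlim_tendsto_pos_mult_at_top[OF tendsto_const _ filterlim_real_sequentially]) simp
  then show ?thesis
    unfolding filterlim_at_infinity_conv_norm_at_top by (simp add: abs_mult)
qed

lemma integral_cross_term_vanishes:
  assumes A: "continuous_on UNIV A" and B: "continuous_on UNIV B"
    and M: "filterlim M at_infinity sequentially"
  shows "(\<lambda>n. integral {-pi..pi} (\<lambda>k. cis (M n * om k) * osc_term \<sigma> A B n (\<xi> / real n) k)) \<longlonglongrightarrow> 0"
proof -
  let ?T = "\<lambda>n. osc_term \<sigma> A B n (\<xi> / real n)" and ?L = "osc_limit \<sigma> \<xi> A B"
  let ?err = "\<lambda>n k. cis (M n * om k) * (?T n k - ?L k)"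
  have U: "uniform_limit {-pi..pi} ?err (\<lambda>_. 0) sequentially"
  proof (rule uniform_limitI)
    fix e :: real assume "e > 0"
    from uniform_limitD[OF uniform_limit_osc_term[OF A B] this]
    show "\<forall>\<^sub>F n in sequentially. \<forall>k\<in>{-pi..pi}. dist (?err n k) 0 < e"
      by eventually_elim (simp add: dist_norm norm_mult)
  qed
  have C: "continuous_on {-pi..pi} (?err n)" for n
    by (intro continuous_intros om_cont continuous_on_osc_term continuous_on_osc_limit A B)
  obtain I J where I: "\<And>n. (?err n has_integral I n) {-pi..pi}"
    and J: "((\<lambda>_. 0) has_integral J) {-pi..pi}" and IJ: "I \<longlonglongrightarrow> J"
    using uniform_limit_integral[OF U C trivial_limit_sequentially] by blast
  have "J = 0" using J has_integral_0 has_integral_unique by blast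
  with IJ have err: "(\<lambda>n. integral {-pi..pi} (?err n)) \<longlonglongrightarrow> 0"
    unfolding integral_unique[OF I] by simp
  have main: "(\<lambda>n. integral {-pi..pi} (\<lambda>k. cis (M n * om k) * ?L k)) \<longlonglongrightarrow> 0"
    using oscillatory_integral_vanishes[OF continuous_on_osc_limit[OF A B]] M
    by (rule filterlim_compose)
  have "integral {-pi..pi} (\<lambda>k. cis (M n * om k) * ?T n k)
      = integral {-pi..pi} (?err n) + integral {-pi..pi} (\<lambda>k. cis (M n * om k) * ?L k)" for n
  proof -
    have "integral {-pi..pi} (\<lambda>k. cis (M n * om k) * ?T n k)
        = integral {-pi..pi} (\<lambda>k. ?err n k + cis (M n * om k) * ?L k)"
      by (simp add: algebra_simps)
    also have "\<dots> = integral {-pi..pi} (?err n) + integral {-pi..pi} (\<lambda>k. cis (M n * om k) * ?L k)"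
      by (intro Henstock_Kurzweil_Integration.integral_add integrable_continuous_interval continuous_intros
          om_cont continuous_on_osc_term continuous_on_osc_limit A B)
    finally show ?thesis .
  qed
  with tendsto_add[OF err main] show ?thesis by simp
qed

lemma tendsto_alternating_sign_zero:
  fixes f :: "nat \<Rightarrow> 'a::real_normed_div_algebra"
  assumes "f \<longlonglongrightarrow> 0"
  shows "(\<lambda>n. (-1)^n * f n) \<longlonglongrightarrow> 0"
  using assms by (subst tendsto_norm_zero_iff[symmetric]) (simp add: norm_mult norm_power tendsto_norm_zero)

lemma correlation_integral_split:
  assumes n: "n \<ge> 1"
  shows "integral {-pi..pi} (\<lambda>k. pH_hat n k * cnj (pH_hat n (k - \<theta>)))
      = integral {-pi..pi} (osc_term (-1) a1 a1 n \<theta>) + integral {-pi..pi} (osc_term 1 a2 a2 n \<theta>)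
        + (-1)^n * (integral {-pi..pi} (\<lambda>k. cis ((-2) * real n * om k) * osc_term 1 a1 a2 n \<theta> k)
                    + integral {-pi..pi} (\<lambda>k. cis (2 * real n * om k) * osc_term (-1) a2 a1 n \<theta> k))"
proof -
  have int: "f integrable_on {-pi..pi}" if "continuous_on {-pi..pi} f" for f :: "real \<Rightarrow> complex"
    by (rule integrable_continuous_interval[OF that])
  have i: "osc_term (-1) a1 a1 n \<theta> integrable_on {-pi..pi}" "osc_term 1 a2 a2 n \<theta> integrable_on {-pi..pi}"
    "(\<lambda>k. cis ((-2) * real n * om k) * osc_term 1 a1 a2 n \<theta> k) integrable_on {-pi..pi}"
    "(\<lambda>k. cis (2 * real n * om k) * osc_term (-1) a2 a1 n \<theta> k) integrable_on {-pi..pi}"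
    by (intro int continuous_intros om_cont continuous_on_osc_term a1_cont a2_cont)+
  show ?thesis
    unfolding correlation_decomposition[OF n]
    by (simp only: Henstock_Kurzweil_Integration.integral_add integral_mult_right integrable_add
        integrable_on_mult_right i)
qed

lemma correlation_integral_limit:
  "(\<lambda>n. integral {-pi..pi} (\<lambda>k. pH_hat n k * cnj (pH_hat n (k - \<xi> / real n))))
     \<longlonglongrightarrow> integral {-pi..pi} (osc_limit (-1) \<xi> a1 a1) + integral {-pi..pi} (osc_limit 1 \<xi> a2 a2)"
proof -
  let ?I = "\<lambda>f. integral {-pi..pi} f"
  let ?T = "\<lambda>\<sigma> A B n. osc_term \<sigma> A B n (\<xi> / real n)"
  let ?C = "\<lambda>c \<sigma> A B n k. cis (c * real n * om k) * ?T \<sigma> A B n k"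
  have cross: "(\<lambda>n. ?I (?C c \<sigma> A B n)) \<longlonglongrightarrow> 0"
    if "continuous_on UNIV A" "continuous_on UNIV B" "c \<noteq> 0" for c \<sigma> A B
    by (rule integral_cross_term_vanishes[OF that(1,2) filterlim_scaled_nat_at_infinity[OF that(3)]])
  have "(\<lambda>n. ?I (?T (-1) a1 a1 n) + ?I (?T 1 a2 a2 n)
        + (-1)^n * (?I (?C (-2) 1 a1 a2 n) + ?I (?C 2 (-1) a2 a1 n)))
      \<longlonglongrightarrow> ?I (osc_limit (-1) \<xi> a1 a1) + ?I (osc_limit 1 \<xi> a2 a2) + 0"
    using a1_cont a2_cont
    by (intro tendsto_add integral_osc_term_limit tendsto_alternating_sign_zero tendsto_add_zero cross) auto
  moreover have "\<forall>\<^sub>F n in sequentially. ?I (\<lambda>k. pH_hat n k * cnj (pH_hat n (k - \<xi> / real n)))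
      = ?I (?T (-1) a1 a1 n) + ?I (?T 1 a2 a2 n) + (-1)^n * (?I (?C (-2) 1 a1 a2 n) + ?I (?C 2 (-1) a2 a1 n))"
    using eventually_ge_at_top[of 1] by eventually_elim (rule correlation_integral_split)
  ultimately show ?thesis by (subst tendsto_cong) simp_all
qed

section \<open>Evaluation of the limit\<close>

text \<open>The quantity of the theorem is a difference of two values of the characteristic function,
  by qH l m^2 = pH m l^2 and the reflection l \<mapsto> n - l.\<close>

lemma sum_eq_char_difference:
  "(1/2) * (\<Sum>l = 0..n. exp (\<i> * complex_of_real (\<xi> * (real n - 2 * real l) / real n)) *
            complex_of_real ((pH l (n - l))\<^sup>2 - (qH l (n - l))\<^sup>2))
   = (pH_char n (\<xi> / real n) - pH_char n ((-\<xi>) / real n)) / 2"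
proof -
  let ?g = "\<lambda>l. cis (\<xi> / real n * (real n - 2 * real l)) * complex_of_real ((pH (n - l) l)\<^sup>2)"
  have split: "(\<Sum>l = 0..n. exp (\<i> * complex_of_real (\<xi> * (real n - 2 * real l) / real n)) *
            complex_of_real ((pH l (n - l))\<^sup>2 - (qH l (n - l))\<^sup>2))
      = pH_char n (\<xi> / real n) - (\<Sum>l = 0..n. ?g l)"
    unfolding pH_char_def atLeast0AtMost[symmetric] sum_subtractf[symmetric]
  proof (intro sum.cong refl)
    fix l
    have "\<xi> * (real n - 2 * real l) / real n = \<xi> / real n * (real n - 2 * real l)" by simp
    then show "exp (\<i> * complex_of_real (\<xi> * (real n - 2 * real l) / real n)) *
            complex_of_real ((pH l (n - l))\<^sup>2 - (qH l (n - l))\<^sup>2) =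
          cis (\<xi> / real n * (real n - 2 * real l)) * complex_of_real ((pH l (n - l))\<^sup>2) - ?g l"
      unfolding cis_conv_exp qH_sq_eq_pH_sq by (simp only: of_real_diff right_diff_distrib)
  qed
  have "(\<Sum>l = 0..n. ?g l) = (\<Sum>l = 0..n. ?g (n + 0 - l))"
    by (rule sum.atLeastAtMost_rev)
  also have "\<dots> = pH_char n ((-\<xi>) / real n)"
    unfolding pH_char_def atLeast0AtMost[symmetric]
  proof (intro sum.cong refl)
    fix l assume "l \<in> {0..n}"
    then have "real (n - l) = real n - real l" "n - (n - l) = l" by (simp_all add: of_nat_diff)
    then show "?g (n + 0 - l) = cis ((-\<xi>) / real n * (real n - 2 * real l)) * complex_of_real ((pH l (n - l))\<^sup>2)"
      by (simp add: algebra_simps)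
  qed
  finally show ?thesis unfolding split by simp
qed

lemma pH_char_as_correlation:
  "pH_char n \<theta> = integral {-pi..pi} (\<lambda>k. pH_hat n k * cnj (pH_hat n (k - \<theta>))) / (2 * pi)"
  using integral_unique[OF parseval[of n \<theta>]] by simp

definition diagonal_limit :: "real \<Rightarrow> complex" where
  "diagonal_limit \<xi> = integral {-pi..pi} (osc_limit (-1) \<xi> a1 a1) + integral {-pi..pi} (osc_limit 1 \<xi> a2 a2)"

lemma sum_limit_diagonal:
  "(\<lambda>n::nat. (1/2) * (\<Sum>l = 0..n.
            exp (\<i> * complex_of_real (\<xi> * (real n - 2 * real l) / real n)) *
            complex_of_real ((pH l (n - l))\<^sup>2 - (qH l (n - l))\<^sup>2)))
         \<longlonglongrightarrow> (diagonal_limit \<xi> - diagonal_limit (-\<xi>)) / (4 * pi)"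
proof -
  let ?corr = "\<lambda>\<xi> n. integral {-pi..pi} (\<lambda>k. pH_hat n k * cnj (pH_hat n (k - \<xi> / real n)))"
  have "(\<lambda>n. (?corr \<xi> n - ?corr (-\<xi>) n) / (4 * pi)) \<longlonglongrightarrow> (diagonal_limit \<xi> - diagonal_limit (-\<xi>)) / (4 * pi)"
    unfolding diagonal_limit_def by (intro tendsto_intros correlation_integral_limit) simp
  then show ?thesis
    unfolding sum_eq_char_difference pH_char_as_correlation by (simp add: field_simps)
qed

lemma amplitude_norm_difference: "a1 k * cnj (a1 k) - a2 k * cnj (a2 k) = complex_of_real (vel k)"
proof -
  define c where "c = cos (om k)"
  define d where "d = 2 * c"
  have c: "c > 0" unfolding c_def by (rule cos_om_pos)
  have a: "a1 k = (cis (-k) + inv_sqrt2 * cis (om k)) / complex_of_real d"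
    "a2 k = (inv_sqrt2 * cis (- om k) - cis (-k)) / complex_of_real d"
    unfolding a1_def a2_def d_def c_def by simp_all
  have re_im: "Re (a1 k) = (cos k + c / sqrt 2) / d" "Im (a1 k) = (sin (om k) / sqrt 2 - sin k) / d"
    "Re (a2 k) = (c / sqrt 2 - cos k) / d" "Im (a2 k) = (sin k - sin (om k) / sqrt 2) / d"
    unfolding a inv_sqrt2_def c_def by (simp_all add: Im_divide_of_real)
  have "(Re (a1 k))^2 + (Im (a1 k))^2 - ((Re (a2 k))^2 + (Im (a2 k))^2)
      = ((cos k + c / sqrt 2)^2 - (c / sqrt 2 - cos k)^2) / d^2"
    unfolding re_im by (simp add: power_divide diff_divide_distrib[symmetric] power2_diff power2_sum
        algebra_simps)
  also have "\<dots> = vel k"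
    unfolding vel_def c_def[symmetric] d_def using c by (simp add: power2_eq_square field_simps)
  finally show ?thesis
    unfolding complex_mult_cnj by (simp flip: of_real_add of_real_diff)
qed

text \<open>Only |a1|^2 - |a2|^2 = vel enters the antisymmetric part of the limit.\<close>

lemma diagonal_limit_difference:
  "diagonal_limit \<xi> - diagonal_limit (-\<xi>)
     = integral {-pi..pi} (\<lambda>k. (cis (-(\<xi> * vel k)) - cis (\<xi> * vel k)) * complex_of_real (vel k))"
proof -
  have i: "osc_limit \<sigma> x A A integrable_on {-pi..pi}" if "A = a1 \<or> A = a2" for \<sigma> x A
    using that by (auto intro!: integrable_continuous_interval continuous_on_osc_limit a1_cont a2_cont)
  have "diagonal_limit \<xi> - diagonal_limit (-\<xi>) = integral {-pi..pi} (\<lambda>k.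
      (osc_limit (-1) \<xi> a1 a1 k + osc_limit 1 \<xi> a2 a2 k) - (osc_limit (-1) (-\<xi>) a1 a1 k + osc_limit 1 (-\<xi>) a2 a2 k))"
    unfolding diagonal_limit_def
    by (simp add: i Henstock_Kurzweil_Integration.integral_diff Henstock_Kurzweil_Integration.integral_add
        integrable_add)
  also have "\<dots> = integral {-pi..pi} (\<lambda>k. (cis (-(\<xi> * vel k)) - cis (\<xi> * vel k)) * complex_of_real (vel k))"
  proof (rule integral_cong)
    fix k
    have "(osc_limit (-1) \<xi> a1 a1 k + osc_limit 1 \<xi> a2 a2 k) - (osc_limit (-1) (-\<xi>) a1 a1 k + osc_limit 1 (-\<xi>) a2 a2 k)
        = (cis (-(\<xi> * vel k)) - cis (\<xi> * vel k)) * (a1 k * cnj (a1 k) - a2 k * cnj (a2 k))"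
      unfolding osc_limit_def by (simp add: algebra_simps)
    then show "(osc_limit (-1) \<xi> a1 a1 k + osc_limit 1 \<xi> a2 a2 k) - (osc_limit (-1) (-\<xi>) a1 a1 k
        + osc_limit 1 (-\<xi>) a2 a2 k) = (cis (-(\<xi> * vel k)) - cis (\<xi> * vel k)) * complex_of_real (vel k)"
      unfolding amplitude_norm_difference .
  qed
  finally show ?thesis .
qed

lemma vel_even: "vel (-k) = vel k"
  by (simp add: vel_def cos_om)

lemma vel_reflect: "vel (pi - k) = - vel k"
  by (simp add: vel_def cos_om)

lemma integral_even_reflect:
  fixes f :: "real \<Rightarrow> complex"
  assumes c: "continuous_on {0..pi} f" and ev: "\<And>x. f (-x) = f x"
  shows "integral {-pi..0} f = integral {0..pi} f"
proof -
  have "(f has_integral integral {0..pi} f) {0..pi}"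
    by (rule integrable_integral, rule integrable_continuous_interval[OF c])
  then have "((\<lambda>x. f (-x)) has_integral integral {0..pi} f) {-pi..-0}"
    by (subst has_integral_reflect_real)
  then have "(f has_integral integral {0..pi} f) {-pi..0}" using ev by simp
  then show ?thesis by (rule integral_unique)
qed

lemma integral_pi_minus:
  fixes f :: "real \<Rightarrow> complex"
  assumes c: "continuous_on {0..pi} f"
  shows "integral {0..pi} (\<lambda>x. f (pi - x)) = integral {0..pi} f"
proof -
  have "((\<lambda>x. (-1) *\<^sub>R f (pi - x)) has_integral (integral {pi - 0..pi - pi} f - integral {pi - pi..pi - 0} f)) {0..pi}"
    by (rule has_integral_substitution_general[of "{}" 0 pi "\<lambda>u. pi - u" 0 pi f "\<lambda>_. -1"])
       (auto intro!: derivative_eq_intros continuous_intros c)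
  then have "((\<lambda>x. - f (pi - x)) has_integral (- integral {0..pi} f)) {0..pi}"
    by simp
  then have "((\<lambda>x. - (- f (pi - x))) has_integral - (- integral {0..pi} f)) {0..pi}"
    by (rule has_integral_neg)
  then show ?thesis by (simp add: integral_unique)
qed

definition half_integral :: "real \<Rightarrow> complex" where
  "half_integral \<xi> = integral {0..pi} (\<lambda>k. cis (\<xi> * vel k) * complex_of_real (vel k))"

text \<open>Folding [-pi, pi] onto [0, pi] with vel (-k) = vel k and vel (pi - k) = - vel k.\<close>

lemma velocity_integral_fold:
  "integral {-pi..pi} (\<lambda>k. (cis (-(\<xi> * vel k)) - cis (\<xi> * vel k)) * complex_of_real (vel k))
     = -4 * half_integral \<xi>"
proof -
  define F where "F k = (cis (-(\<xi> * vel k)) - cis (\<xi> * vel k)) * complex_of_real (vel k)" for k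
  let ?A = "\<lambda>k. cis (-(\<xi> * vel k)) * complex_of_real (vel k)"
  let ?B = "\<lambda>k. cis (\<xi> * vel k) * complex_of_real (vel k)"
  have cont: "continuous_on S F" "continuous_on S ?A" "continuous_on S ?B" for S
    unfolding F_def by (intro continuous_intros vel_cont)+
  have "integral {-pi..0} F + integral {0..pi} F = integral {-pi..pi} F"
    by (rule Henstock_Kurzweil_Integration.integral_combine)
       (auto intro: integrable_continuous_interval cont)
  moreover have "F (-x) = F x" for x unfolding F_def vel_even ..
  ultimately have s1: "integral {-pi..pi} F = 2 * integral {0..pi} F"
    using integral_even_reflect[OF cont(1)] by simp
  have s2: "integral {0..pi} F = integral {0..pi} ?A - integral {0..pi} ?B"
    unfolding F_def left_diff_distrib
    by (rule Henstock_Kurzweil_Integration.integral_diff) (auto intro: integrable_continuous_interval cont)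
  have "integral {0..pi} ?A = integral {0..pi} (\<lambda>x. ?A (pi - x))"
    using integral_pi_minus[OF cont(2)] by simp
  also have "\<dots> = - integral {0..pi} ?B" by (simp add: vel_reflect)
  finally show ?thesis unfolding F_def[symmetric] s1 s2 half_integral_def by simp
qed


text \<open>Inverting the group velocity on [0, pi]: vel k = x iff cos k = x / sqrt (1 - x^2), which
  gives the substitution turning the half-period integral into the stated density.\<close>

definition vel_inv_cos :: "real \<Rightarrow> real" where
  "vel_inv_cos x = x / sqrt (1 - x^2)"

definition vel_inv :: "real \<Rightarrow> real" where
  "vel_inv x = arccos (vel_inv_cos x)"

definition vel_inv_deriv :: "real \<Rightarrow> real" where
  "vel_inv_deriv x = -1 / ((1 - x^2) * sqrt (1 - 2 * x^2))"

text \<open>Elementary bounds on the interval [-1/sqrt 2, 1/sqrt 2] = vel ` [0, pi].\<close>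

lemma sq_le_half: assumes "x \<in> {-(1/sqrt 2)..1/sqrt 2}" shows "x^2 \<le> 1/2"
proof -
  have "\<bar>x\<bar> \<le> \<bar>1/sqrt 2\<bar>" using assms by auto
  then have "x^2 \<le> (1/sqrt 2)^2" by (simp only: abs_le_square_iff)
  then show ?thesis by (simp add: power_divide)
qed

lemma sq_less_half: assumes "x \<in> {-(1/sqrt 2)<..<1/sqrt 2}" shows "x^2 < 1/2"
proof -
  have "\<bar>x\<bar> < 1/sqrt 2" using assms by auto
  then have "\<bar>x\<bar>^2 < (1/sqrt 2)^2" by (intro power_strict_mono) auto
  then show ?thesis by (simp add: power_divide)
qed

lemma vel_cos_form: "vel k = cos k / sqrt (1 + (cos k)^2)"
proof -
  have "sqrt 2 * cos (om k) = sqrt (2 * (1 - (sin k)^2 / 2))"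
    unfolding cos_om by (simp only: real_sqrt_mult)
  also have "\<dots> = sqrt (1 + (cos k)^2)"
    by (rule arg_cong[where f=sqrt]) (use sin_cos_squared_add[of k] in \<open>simp add: algebra_simps\<close>)
  finally show ?thesis unfolding vel_def by simp
qed

lemma vel_inv_cos_sq: "x^2 < 1 \<Longrightarrow> (vel_inv_cos x)^2 = x^2 / (1 - x^2)"
  unfolding vel_inv_cos_def by (simp add: power_divide)

lemma vel_inv_cos_bounds: assumes "x^2 \<le> 1/2" shows "-1 \<le> vel_inv_cos x" "vel_inv_cos x \<le> 1"
proof -
  have "(vel_inv_cos x)^2 = x^2 / (1 - x^2)" using assms by (intro vel_inv_cos_sq) simp
  also have "\<dots> \<le> 1" using assms by (simp add: divide_le_eq)
  finally have "\<bar>vel_inv_cos x\<bar> \<le> 1" by (metis abs_square_le_1)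
  then show "-1 \<le> vel_inv_cos x" "vel_inv_cos x \<le> 1" by auto
qed

lemma vel_inv_cos_strict_bounds: assumes "x^2 < 1/2" shows "-1 < vel_inv_cos x" "vel_inv_cos x < 1"
proof -
  have "(vel_inv_cos x)^2 = x^2 / (1 - x^2)" using assms by (intro vel_inv_cos_sq) simp
  also have "\<dots> < 1" using assms by (simp add: divide_less_eq)
  finally have "\<bar>vel_inv_cos x\<bar> < 1" by (metis abs_square_less_1)
  then show "-1 < vel_inv_cos x" "vel_inv_cos x < 1" by auto
qed

lemma vel_vel_inv: assumes "x^2 \<le> 1/2" shows "vel (vel_inv x) = x"
proof -
  have p: "1 - x^2 > 0" using assms by simp
  define S where "S = sqrt (1 - x^2)"
  have S: "S > 0" "S^2 = 1 - x^2" unfolding S_def using p by auto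
  have c: "cos (vel_inv x) = vel_inv_cos x"
    unfolding vel_inv_def using vel_inv_cos_bounds[OF assms] by simp
  have "1 + (vel_inv_cos x)^2 = 1 / S^2" using S p unfolding vel_inv_cos_def S_def[symmetric]
    by (simp add: power_divide field_simps)
  then have "sqrt (1 + (vel_inv_cos x)^2) = 1 / S" using S by (simp add: real_sqrt_divide S_def)
  then show ?thesis unfolding vel_cos_form c using S unfolding vel_inv_cos_def by (simp add: S_def)
qed

text \<open>The derivative of the inverse function, which becomes the density of the theorem.\<close>

lemma vel_inv_has_derivative:
  assumes "x^2 < 1/2" shows "(vel_inv has_real_derivative vel_inv_deriv x) (at x)"
proof -
  have p: "1 - x^2 > 0" using assms by simp
  define S where "S = sqrt (1 - x^2)"
  have S: "S > 0" "S * S = 1 - x^2" unfolding S_def using p by auto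
  define T where "T = sqrt (1 - 2 * x^2)"
  have T: "T > 0" "T * T = 1 - 2 * x^2" unfolding T_def using assms by auto
  have d0: "((\<lambda>x. 1 - x^2) has_real_derivative (- (2 * x))) (at x)"
    by (auto intro!: derivative_eq_intros)
  have dS: "((\<lambda>x. sqrt (1 - x^2)) has_real_derivative (inverse (sqrt (1 - x^2)) / 2 * (- (2 * x)))) (at x)"
    by (rule DERIV_chain2[OF DERIV_real_sqrt[OF p] d0])
  have dY: "(vel_inv_cos has_real_derivative ((1 * S - (inverse S / 2 * (- (2 * x))) * x) / S ^ Suc (Suc 0))) (at x)"
    unfolding vel_inv_cos_def[abs_def] S_def using DERIV_quotient[OF DERIV_ident dS] p by simp
  have dK: "(vel_inv has_real_derivative (inverse (- sqrt (1 - (vel_inv_cos x)^2))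
      * ((1 * S - (inverse S / 2 * (- (2 * x))) * x) / S ^ Suc (Suc 0)))) (at x)"
    unfolding vel_inv_def[abs_def]
    by (rule DERIV_chain2[OF DERIV_arccos dY]) (use vel_inv_cos_strict_bounds[OF assms] in auto)
  have q: "sqrt (1 - (vel_inv_cos x)^2) = T / S"
  proof -
    have "1 - (vel_inv_cos x)^2 = (T / S)^2" unfolding vel_inv_cos_def S_def[symmetric] using S T
      by (simp add: power_divide field_simps power2_eq_square)
    then show ?thesis using S T by simp
  qed
  have "inverse (- sqrt (1 - (vel_inv_cos x)^2)) * ((1 * S - (inverse S / 2 * (- (2 * x))) * x) / S ^ Suc (Suc 0))
      = vel_inv_deriv x"
    unfolding q vel_inv_deriv_def T_def[symmetric] S(2)[symmetric] using S T
    by (simp add: field_simps power2_eq_square)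
  with dK show ?thesis by simp
qed

lemma vel_inv_cont: "continuous_on {-(1/sqrt 2)..1/sqrt 2} vel_inv"
proof -
  have "sqrt (1 - x^2) \<noteq> 0" if "x \<in> {-(1/sqrt 2)..1/sqrt 2}" for x
    using sq_le_half[OF that] by simp
  then have "continuous_on {-(1/sqrt 2)..1/sqrt 2} vel_inv_cos"
    unfolding vel_inv_cos_def[abs_def] by (intro continuous_intros) auto
  then show ?thesis unfolding vel_inv_def[abs_def]
    by (intro continuous_intros) (auto dest: sq_le_half intro: vel_inv_cos_bounds)
qed

lemma vel_inv_endpoints: "vel_inv (1/sqrt 2) = 0" "vel_inv (-(1/sqrt 2)) = pi"
proof -
  have "sqrt (1 - (1/sqrt 2)^2) = 1/sqrt 2" by (simp add: power_divide real_sqrt_divide)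
  then have "vel_inv_cos (1/sqrt 2) = 1" "vel_inv_cos (-(1/sqrt 2)) = -1"
    unfolding vel_inv_cos_def by simp_all
  then show "vel_inv (1/sqrt 2) = 0" "vel_inv (-(1/sqrt 2)) = pi" unfolding vel_inv_def by simp_all
qed

text \<open>The substitution k = vel_inv x, which maps [-1/sqrt 2, 1/sqrt 2] onto [pi, 0].\<close>

lemma half_integral_substitution:
  "((\<lambda>x. complex_of_real (vel_inv_deriv x) * (cis (\<xi> * x) * complex_of_real x))
      has_integral - half_integral \<xi>) {-(1/sqrt 2)..1/sqrt 2}"
proof -
  let ?a = "1/sqrt 2"
  define h where "h k = cis (\<xi> * vel k) * complex_of_real (vel k)" for k
  have hc: "continuous_on {0..pi} h" unfolding h_def[abs_def] by (intro continuous_intros vel_cont)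
  have range: "vel_inv ` {-?a..?a} \<subseteq> {0..pi}"
    using arccos_bounded[OF vel_inv_cos_bounds] sq_le_half by (auto simp: vel_inv_def)
  have "((\<lambda>x. vel_inv_deriv x *\<^sub>R h (vel_inv x)) has_integral
      (integral {vel_inv (-?a)..vel_inv ?a} h - integral {vel_inv ?a..vel_inv (-?a)} h)) {-?a..?a}"
  proof (rule has_integral_substitution_general[of "{-?a, ?a}" "-?a" ?a vel_inv 0 pi h vel_inv_deriv])
    fix x assume "x \<in> {-?a..?a} - {-?a, ?a}"
    then have "x^2 < 1/2" by (intro sq_less_half) auto
    then show "(vel_inv has_field_derivative vel_inv_deriv x) (at x within {-?a..?a})"
      by (rule has_field_derivative_at_within[OF vel_inv_has_derivative])
  qed (use range hc vel_inv_cont in auto)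
  then have "((\<lambda>x. vel_inv_deriv x *\<^sub>R h (vel_inv x)) has_integral (- half_integral \<xi>)) {-?a..?a}"
    unfolding half_integral_def h_def vel_inv_endpoints by simp
  then show ?thesis
  proof (rule has_integral_eq[rotated])
    fix x assume "x \<in> {-?a..?a}"
    then have "vel (vel_inv x) = x" using vel_vel_inv sq_le_half by blast
    then show "vel_inv_deriv x *\<^sub>R h (vel_inv x) = complex_of_real (vel_inv_deriv x) * (cis (\<xi> * x) * complex_of_real x)"
      unfolding h_def by (simp add: scaleR_conv_of_real)
  qed
qed

lemma target_integral_eq:
  "integral {- 1 / sqrt 2 .. 1 / sqrt 2}
     (\<lambda>x::real. exp (\<i> * complex_of_real (\<xi> * x)) *
        complex_of_real (x / (pi * (1 - x\<^sup>2) * sqrt (1 - 2 * x\<^sup>2)))) = half_integral \<xi> / pi"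
proof -
  have pw: "exp (\<i> * complex_of_real (\<xi> * x)) * complex_of_real (x / (pi * (1 - x\<^sup>2) * sqrt (1 - 2 * x\<^sup>2)))
      = complex_of_real (-1/pi) * (complex_of_real (vel_inv_deriv x) * (cis (\<xi> * x) * complex_of_real x))" for x
  proof -
    have "(-1/pi) * vel_inv_deriv x * x = x / (pi * (1 - x\<^sup>2) * sqrt (1 - 2 * x\<^sup>2))"
      unfolding vel_inv_deriv_def by (simp add: divide_inverse mult_ac)
    then have "complex_of_real (x / (pi * (1 - x\<^sup>2) * sqrt (1 - 2 * x\<^sup>2)))
        = complex_of_real (-1/pi) * complex_of_real (vel_inv_deriv x) * complex_of_real x"
      by (metis of_real_mult)
    then show ?thesis by (simp add: cis_conv_exp mult_ac)
  qed
  have dom: "{- 1 / sqrt 2 .. 1 / sqrt 2} = {-(1/sqrt 2)..1/sqrt 2::real}" by simp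
  have "integral {-(1/sqrt 2)..1/sqrt 2}
      (\<lambda>x. complex_of_real (-1/pi) * (complex_of_real (vel_inv_deriv x) * (cis (\<xi> * x) * complex_of_real x)))
      = complex_of_real (-1/pi) * (- half_integral \<xi>)"
    by (rule integral_unique[OF has_integral_mult_right[OF half_integral_substitution]])
  then show ?thesis unfolding dom pw by (simp add: field_simps)
qed

theorem mainTheorem10:
  fixes \<xi> :: real
  shows "(\<lambda>n::nat. (1/2) * (\<Sum>l = 0..n.
            exp (\<i> * complex_of_real (\<xi> * (real n - 2 * real l) / real n)) *
            complex_of_real ((pH l (n - l))\<^sup>2 - (qH l (n - l))\<^sup>2)))
         \<longlonglongrightarrow>
         - integral {- 1 / sqrt 2 .. 1 / sqrt 2}
             (\<lambda>x::real. exp (\<i> * complex_of_real (\<xi> * x)) *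
                complex_of_real (x / (pi * (1 - x\<^sup>2) * sqrt (1 - 2 * x\<^sup>2))))"
proof -
  have "(diagonal_limit \<xi> - diagonal_limit (-\<xi>)) / (4 * pi) = - (half_integral \<xi> / pi)"
    unfolding diagonal_limit_difference velocity_integral_fold by (simp add: field_simps)
  with sum_limit_diagonal[of \<xi>] show ?thesis
    unfolding target_integral_eq by simp
qed

end
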